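(* Every morphism $f\colon[n]\to[m]$ of $\mathcal{I}\Gamma(as)$ can be written uniquely as $f=a\circ h$ with $h\in H_{n+1}^{+}$ and $a\colon[n]\to[m]$ a morphism of the subcategory $\mathcal{R}\cong\Delta R^{op}$. That is, $\mathcal{I}\Gamma(as)=\Delta R^{op}\circ\mathbf{H}^{+}$.
   Context: Let $C_2=\{1,t\}$ and $[n]=\{0,\dots,n\}$. The category $\mathcal{IF}(as)$ has objects $[n]$; a morphism $f\colon[n]\to[m]$ is a map of sets with a total order on each fibre $f^{-1}(i)$ and a label in $C_2$ on each element of $[n]$ (written $j^\alpha$). For $S=\{j_1^{\alpha_1}<\cdots<j_r^{\alpha_r}\}$ put $1\ast S=S$, $t\ast S=\{j_r^{t\alpha_r}<\cdots<j_1^{t\alpha_1}\}$; the composite of $f\colon[n]\to[m]$, $g\colon[m]\to[p]$ has underlying map $g\circ f$ and fibres $(g\circ f)^{-1}(i)=\coprod_{j^\alpha\in g^{-1}(i)}\alpha\ast f^{-1}(j)$ (ordered disjoint union). $\mathcal{I}\Gamma(as)$ is the subcategory of morphisms with $f(0)=0$. $H_{n+1}$ is the automorphism group of $[n]$ in $\mathcal{IF}(as)$, and $H_{n+1}^{+}$ the subgroup of automorphisms fixing $0$ whose label on $0$ is $1$; $\mathbf{H}^+$ is the corresponding groupoid. Morphisms of $\mathcal{I}\Gamma(as)$ (all labels $1$ unless stated): for $n\geqslant1$ and $0\leqslant i\leqslant n-1$, $d_i\colon[n]\to[n-1]$ sends $j\mapsto j$ ($j\leqslant i$), $j\mapsto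 j-1$ ($j>i$), with fibre over $i$ equal to $\{i<i+1\}$; $d_n\colon[n]\to[n-1]$ sends $j\mapsto j$ ($j<n$), $n\mapsto0$, with fibre over $0$ equal to $\{n<0\}$; for $0\leqslant j\leqslant n$, $s_j\colon[n]\to[n+1]$ sends $k\mapsto k$ ($k\leqslant j$), $k\mapsto k+1$ ($k>j$), so the fibre over $j+1$ is empty; $\rho_n\colon[n]\to[n]$ sends $0\mapsto 0$ and $k\mapsto n+1-k$ for $1\leqslant k\leqslant n$, with all labels equal to $t$. $\mathcal{R}$ denotes the subcategory of $\mathcal{I}\Gamma(as)$ generated by all $d_i$, $s_j$, $\rho_n$; it is isomorphic to $\Delta R^{op}$, the opposite of the reflexive crossed simplicial group category. *)

theory Defs
  imports Main
begin

text \<open>A morphism [n] \<rightarrow> [m] of IF(as) is encoded by its source n, target m and,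
for each i in [m] = {0..m}, the list of its fibre over i in the fibre's total order,
each element j of [n] carrying its label in C2 (False = 1, True = t).\<close>

datatype mor = Mor (src: nat) (tgt: nat) (fib: "(nat \<times> bool) list list")

definition valid :: "mor \<Rightarrow> bool" where
  "valid f \<longleftrightarrow> length (fib f) = tgt f + 1
     \<and> distinct (map fst (concat (fib f)))
     \<and> set (map fst (concat (fib f))) = {0..src f}"

definition act :: "bool \<Rightarrow> (nat \<times> bool) list \<Rightarrow> (nat \<times> bool) list" where
  "act \<alpha> S = (if \<alpha> then map (\<lambda>(x, \<beta>). (x, \<not> \<beta>)) (rev S) else S)"

text \<open>Composite g \<circ> f (f first).\<close>
definition comp :: "mor \<Rightarrow> mor \<Rightarrow> mor" where
  "comp g f = Mor (src f) (tgt g)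
     (map (\<lambda>S. concat (map (\<lambda>(j, \<alpha>). act \<alpha> (fib f ! j)) S)) (fib g))"

definition idm :: "nat \<Rightarrow> mor" where
  "idm n = Mor n n (map (\<lambda>k. [(k, False)]) [0..<n+1])"

text \<open>Morphisms of I\<Gamma>(as): f(0) = 0.\<close>
definition IGamma :: "mor \<Rightarrow> bool" where
  "IGamma f \<longleftrightarrow> valid f \<and> 0 \<in> fst ` set (fib f ! 0)"

definition face :: "nat \<Rightarrow> nat \<Rightarrow> mor" where
  "face n i = Mor n (n - 1)
     (map (\<lambda>k. if i = n then (if k = 0 then [(n, False), (0, False)] else [(k, False)])
               else if k < i then [(k, False)]
               else if k = i then [(i, False), (i + 1, False)]
               else [(k + 1, False)]) [0..<n])"

definition degen :: "nat \<Rightarrow> nat \<Rightarrow> mor" where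
  "degen n j = Mor n (n + 1)
     (map (\<lambda>k. if k \<le> j then [(k, False)]
               else if k = j + 1 then []
               else [(k - 1, False)]) [0..<n+2])"

definition refl_mor :: "nat \<Rightarrow> mor" where
  "refl_mor n = Mor n n
     (map (\<lambda>k. if k = 0 then [(0, True)] else [(n + 1 - k, True)]) [0..<n+1])"

inductive_set Rcat :: "mor set" where
  R_id: "idm n \<in> Rcat"
| R_face: "1 \<le> n \<Longrightarrow> i \<le> n \<Longrightarrow> face n i \<in> Rcat"
| R_degen: "j \<le> n \<Longrightarrow> degen n j \<in> Rcat"
| R_refl: "refl_mor n \<in> Rcat"
| R_comp: "a \<in> Rcat \<Longrightarrow> b \<in> Rcat \<Longrightarrow> tgt a = src b \<Longrightarrow> comp b a \<in> Rcat"

text \<open>H^+_{n+1}: automorphisms of [n] fixing 0 with label 1 on 0.\<close>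
definition Hplus :: "nat \<Rightarrow> mor set" where
  "Hplus n = {h. valid h \<and> src h = n \<and> tgt h = n
                 \<and> (\<forall>k \<le> n. length (fib h ! k) = 1)
                 \<and> fib h ! 0 = [(0, False)]}"

end

theory Submission
  imports Defs
begin

text \<open>
  A morphism of $\mathcal{R}$ is determined by its fibre shape: read in order, its fibres list
  $[n]$ cyclically, increasing with all labels $1$ or decreasing with all labels $t$, and $0$ lies
  over $0$. This holds for the generators and is stable under composition. Conversely every such
  shape is reached: start from the fibres $\{\dots, 0\}, \{1\}, \dots$ of a composite of faces
  $d_n$, precomposed with $\rho_n$ for the decreasing orders, then merge adjacent fibres by faces
  and insert empty fibres by degeneracies.

  Precomposing with $h \in H^{+}_{n+1}$ keeps the fibre shape and renames the labelled elements.
  Given $f$, take the cyclic order carrying the label of $0$ in $f$ that puts $0$ where it sits in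
  the concatenated fibres of $f$; cutting it into the fibre lengths of $f$ gives $a$, and renaming
  it into the fibres of $f$ gives $h$. Since $h$ fixes $0$ with label $1$, the position of $0$ in
  $f$ determines the rotation and the label of $a$, hence $a$, and then $h$.
\<close>

declare upt_Suc[simp del]

lemma concat_map_concat: "concat (map (\<lambda>S. concat (map g S)) L) = concat (map g (concat L))"
  by (induction L) auto

lemma concat_rotate_ex: "\<exists>r'. concat (rotate r xs) = rotate r' (concat xs)"
proof (induction r)
  case 0
  show ?case by (rule exI[of _ 0]) simp
next
  case (Suc r)
  then obtain r' where r': "concat (rotate r xs) = rotate r' (concat xs)" by blast
  show ?case
  proof (cases "rotate r xs")
    case Nil
    then show ?thesis using r' by (metis rotate1_is_Nil_conv rotate_Suc)
  next
    case (Cons y ys)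
    have "concat (rotate (Suc r) xs) = concat ys @ y" using Cons by simp
    also have "\<dots> = rotate (length y) (y @ concat ys)" by (simp add: rotate_append)
    also have "\<dots> = rotate (length y + r') (concat xs)" using r' Cons by (simp add: rotate_rotate)
    finally show ?thesis by blast
  qed
qed

lemma rev_rotate_ex: "\<exists>r'. rev (rotate r xs) = rotate r' (rev xs)"
proof (cases "xs = []")
  case True
  then show ?thesis by simp
next
  case False
  define L where "L = length xs"
  have L: "L > 0" using False L_def by simp
  have "(L - ((L - r mod L) mod L)) mod L = r mod L"
    using L by (cases "r mod L = 0") simp_all
  then have "rotate (L - ((L - r mod L) mod L)) xs = rotate r xs"
    by (metis L_def rotate_conv_mod)
  then show ?thesis using rotate_rev[of "L - r mod L" xs] L_def by metis
qed

lemma rotate_eq_of_nth_eq: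
  assumes "distinct xs" "q < length xs" "rotate r xs ! q = rotate r' xs ! q"
  shows "rotate r xs = rotate r' xs"
proof -
  define L where "L = length xs"
  have L: "L > 0" using assms(2) L_def by linarith
  have "xs ! ((r + q) mod L) = xs ! ((r' + q) mod L)"
    using assms nth_rotate L_def by metis
  then have "(r + q) mod L = (r' + q) mod L"
    using assms L by (simp add: nth_eq_iff_index_eq L_def)
  then have "r mod L = r' mod L" by (simp add: nat_mod_eq_iff)
  then show ?thesis using rotate_conv_mod L_def by metis
qed

lemma upt_split: "i \<le> j \<Longrightarrow> j \<le> k \<Longrightarrow> [i..<k] = [i..<j] @ [j..<k]"
  by (metis le_add_diff_inverse upt_add_eq_append)

lemma concat_eq_concat_if_lengths_eq:
  "concat xs = concat ys \<Longrightarrow> map length xs = map length ys \<Longrightarrow> xs = ys"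
proof (induction xs arbitrary: ys)
  case (Cons x xs)
  then obtain y ys' where "ys = y # ys'" by (cases ys) auto
  with Cons show ?case by auto
qed simp

fun chunks :: "nat list \<Rightarrow> 'a list \<Rightarrow> 'a list list" where
  "chunks [] xs = []"
| "chunks (l # ls) xs = take l xs # chunks ls (drop l xs)"

lemma length_chunks [simp]: "length (chunks ls xs) = length ls"
  by (induction ls arbitrary: xs) auto

lemma concat_chunks: "concat (chunks ls xs) = take (sum_list ls) xs"
  by (induction ls arbitrary: xs) (auto simp: take_add)

lemma map_chunks: "map (map f) (chunks ls xs) = chunks ls (map f xs)"
  by (induction ls arbitrary: xs) (auto simp: take_map drop_map)

lemma chunks_concat: "chunks (map length G) (concat G) = G"
  by (induction G) auto

lemma src_comp [simp]: "src (comp b a) = src a" and tgt_comp [simp]: "tgt (comp b a) = tgt b"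
  by (simp_all add: comp_def)

lemma src_face [simp]: "src (face n i) = n"
  and src_degen [simp]: "src (degen n j) = n"
  and src_refl_mor [simp]: "src (refl_mor n) = n" and tgt_refl_mor [simp]: "tgt (refl_mor n) = n"
  by (simp_all add: face_def degen_def refl_mor_def)

lemma act_False [simp]: "act False S = S"
  by (simp add: act_def)

lemma fst_set_act: "fst ` set (act \<alpha> S) = fst ` set S"
  by (simp add: act_def image_image case_prod_beta)

section \<open>The cyclic invariant of $\mathcal{R}$\<close>

definition std_order :: "bool \<Rightarrow> nat \<Rightarrow> nat list" where
  "std_order \<alpha> n = (if \<alpha> then rev [0..<n+1] else [0..<n+1])"

lemma set_std_order [simp]: "set (std_order \<alpha> n) = {0..<n+1}"
  and distinct_std_order [simp]: "distinct (std_order \<alpha> n)"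
  and length_std_order [simp]: "length (std_order \<alpha> n) = n + 1"
  and rev_std_order: "rev (std_order \<alpha> n) = std_order (\<not> \<alpha>) n"
  by (simp_all add: std_order_def)

definition cyclic_mor :: "mor \<Rightarrow> bool" where
  "cyclic_mor g \<longleftrightarrow> length (fib g) = tgt g + 1 \<and> 0 \<in> fst ` set (fib g ! 0)
     \<and> (\<exists>\<alpha> r. concat (fib g) = map (\<lambda>x. (x, \<alpha>)) (rotate r (std_order \<alpha> (src g))))"

lemma cyclic_morI:
  assumes "concat (fib g) = map (\<lambda>x. (x, \<alpha>)) (rotate r (std_order \<alpha> (src g)))"
    and "length (fib g) = tgt g + 1" "0 \<in> fst ` set (fib g ! 0)"
  shows "cyclic_mor g"
  using assms unfolding cyclic_mor_def by blast

text \<open>Up to rotation, the concatenated fibres of $b \circ a$ for cyclic $b$ with label $\beta$: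
  the fibres $F$ of $a$, taken in the order of $b$ and acted on by $\beta$.\<close>
lemma concat_act_std_order:
  assumes len: "length F = m + 1"
    and F: "concat F = map (\<lambda>x. (x, \<alpha>)) (rotate r (std_order \<alpha> n))"
  shows "\<exists>\<gamma> r'. concat (map (\<lambda>j. act \<beta> (F ! j)) (std_order \<beta> m))
    = map (\<lambda>x. (x, \<gamma>)) (rotate r' (std_order \<gamma> n))"
proof (cases \<beta>)
  case False
  then have "map (\<lambda>j. act \<beta> (F ! j)) (std_order \<beta> m) = map (\<lambda>j. F ! j) [0..<length F]"
    using len by (simp add: std_order_def)
  then show ?thesis using F by (metis map_nth)
next
  case True
  define flip where "flip = (\<lambda>(x::nat, b::bool). (x, \<not> b))"
  have "map (\<lambda>j. act \<beta> (F ! j)) (std_order \<beta> m)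
      = rev (map (\<lambda>S. map flip (rev S)) (map (\<lambda>j. F ! j) [0..<length F]))"
    using True len by (simp add: std_order_def act_def flip_def rev_map o_def)
  then have "concat (map (\<lambda>j. act \<beta> (F ! j)) (std_order \<beta> m)) = map flip (rev (concat F))"
    by (simp add: map_nth rev_concat rev_map map_concat o_def)
  also have "\<dots> = map (\<lambda>x. (x, \<not> \<alpha>)) (rev (rotate r (std_order \<alpha> n)))"
    by (simp add: F rev_map flip_def o_def)
  finally have "concat (map (\<lambda>j. act \<beta> (F ! j)) (std_order \<beta> m))
      = map (\<lambda>x. (x, \<not> \<alpha>)) (rev (rotate r (std_order \<alpha> n)))" .
  moreover obtain r' where "rev (rotate r (std_order \<alpha> n)) = rotate r' (rev (std_order \<alpha> n))"
    using rev_rotate_ex by blast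
  ultimately show ?thesis using rev_std_order by metis
qed

lemma cyclic_mor_comp:
  assumes a: "cyclic_mor a" and b: "cyclic_mor b" and ab: "tgt a = src b"
  shows "cyclic_mor (comp b a)"
proof -
  obtain \<alpha> ra where ra: "concat (fib a) = map (\<lambda>x. (x, \<alpha>)) (rotate ra (std_order \<alpha> (src a)))"
    using a cyclic_mor_def by blast
  obtain \<beta> rb where rb: "concat (fib b) = map (\<lambda>x. (x, \<beta>)) (rotate rb (std_order \<beta> (src b)))"
    using b cyclic_mor_def by blast
  have la: "length (fib a) = src b + 1" using a ab cyclic_mor_def by simp
  have lb: "length (fib b) = tgt b + 1" using b cyclic_mor_def by simp
  have zero: "0 \<in> fst ` set (fib (comp b a) ! 0)"
  proof -
    obtain \<beta>0 where "(0, \<beta>0) \<in> set (fib b ! 0)" using b cyclic_mor_def by force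
    moreover have "0 \<in> fst ` set (act \<beta>0 (fib a ! 0))" using a cyclic_mor_def fst_set_act by metis
    moreover have "fib (comp b a) ! 0 = concat (map (\<lambda>(j, \<alpha>). act \<alpha> (fib a ! j)) (fib b ! 0))"
      using lb by (simp add: comp_def)
    ultimately show ?thesis by force
  qed
  define A where "A = map (\<lambda>j. act \<beta> (fib a ! j)) (std_order \<beta> (src b))"
  have "concat (fib (comp b a)) = concat (map (\<lambda>(j, \<alpha>). act \<alpha> (fib a ! j)) (concat (fib b)))"
    by (simp add: comp_def concat_map_concat)
  also have "\<dots> = concat (rotate rb A)" by (simp add: rb A_def o_def rotate_map)
  finally have concat_ba: "concat (fib (comp b a)) = concat (rotate rb A)" .
  obtain r1 where r1: "concat (rotate rb A) = rotate r1 (concat A)"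
    using concat_rotate_ex by blast
  obtain \<gamma> r where "concat A = map (\<lambda>x. (x, \<gamma>)) (rotate r (std_order \<gamma> (src a)))"
    using concat_act_std_order[OF la ra] unfolding A_def by blast
  then have "concat (fib (comp b a))
      = map (\<lambda>x. (x, \<gamma>)) (rotate (r1 + r) (std_order \<gamma> (src (comp b a))))"
    using concat_ba r1 by (simp add: rotate_map rotate_rotate)
  then show ?thesis using lb zero by (intro cyclic_morI) (simp_all add: comp_def)
qed

lemma cyclic_mor_idm: "cyclic_mor (idm n)"
proof -
  have concat_fib: "concat (fib (idm n)) = map (\<lambda>x. (x, False)) (rotate 0 (std_order False (src (idm n))))"
    by (simp add: idm_def std_order_def)
  show ?thesis by (rule cyclic_morI[OF concat_fib]) (simp_all add: idm_def)
qed

lemma cyclic_mor_face_last: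
  assumes "1 \<le> n"
  shows "cyclic_mor (face n n)"
proof -
  obtain k where k: "n = Suc k" using assms by (cases n) auto
  have f: "fib (face n n) = [(n, False), (0, False)] # map (\<lambda>k. [(k, False)]) [1..<n]"
    using k by (simp add: face_def upt_conv_Cons)
  have "concat (fib (face n n)) = map (\<lambda>x. (x, False)) (n # [0..<n])"
    unfolding f using k by (simp add: upt_conv_Cons)
  also have "n # [0..<n] = rotate (length [0..<n]) ([0..<n] @ [n])"
    by (simp only: rotate_append) simp
  finally have concat_fib: "concat (fib (face n n))
      = map (\<lambda>x. (x, False)) (rotate n (std_order False (src (face n n))))"
    by (simp add: std_order_def face_def upt_Suc)
  show ?thesis
    by (rule cyclic_morI[OF concat_fib]) (use f in \<open>simp_all add: face_def\<close>)
qed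

lemma cyclic_mor_face_inner:
  assumes i: "i < n"
  shows "cyclic_mor (face n i)"
proof -
  have f: "fib (face n i) = map (\<lambda>k. [(k, False)]) [0..<i] @ [(i, False), (i+1, False)] #
        map (\<lambda>k. [(k, False)]) [i+2..<n+1]"
  proof -
    have "[0..<n] = [0..<i] @ i # [Suc i..<n]" using i
      by (subst upt_split[of 0 i n]) (simp_all add: upt_conv_Cons)
    moreover have "map (\<lambda>k. [(k + 1, False)]) [Suc i..<n] = map (\<lambda>k. [(k, False)]) [Suc (Suc i)..<Suc n]"
      by (rule nth_equalityI) simp_all
    moreover have "map (\<lambda>k. if k < i then [(k, False)] else if k = i then [(i, False), (i + 1, False)]
         else [(k + 1, False)]) [Suc i..<n] = map (\<lambda>k. [(k + 1, False)]) [Suc i..<n]"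
      by (rule map_cong) auto
    moreover have "map (\<lambda>k. if k < i then [(k, False)] else if k = i then [(i, False), (i + 1, False)]
         else [(k + 1, False)]) [0..<i] = map (\<lambda>k. [(k, False)]) [0..<i]"
      by (rule map_cong) auto
    ultimately show ?thesis using i by (simp add: face_def)
  qed
  have "concat (fib (face n i)) = map (\<lambda>x. (x, False)) ([0..<i] @ i # (i+1) # [i+2..<n+1])"
    by (simp add: f)
  also have "[0..<i] @ i # (i+1) # [i+2..<n+1] = [0..<n+1]"
    using i by (subst upt_split[of 0 i "n+1"]) (simp_all add: upt_conv_Cons)
  finally have concat_fib: "concat (fib (face n i))
      = map (\<lambda>x. (x, False)) (rotate 0 (std_order False (src (face n i))))"
    by (simp add: std_order_def face_def)
  show ?thesis
    by (rule cyclic_morI[OF concat_fib]) (use i in \<open>simp_all add: face_def\<close>)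
qed

lemma cyclic_mor_face: "1 \<le> n \<Longrightarrow> i \<le> n \<Longrightarrow> cyclic_mor (face n i)"
  using cyclic_mor_face_last cyclic_mor_face_inner by (cases "i = n") auto

lemma cyclic_mor_degen:
  assumes "j \<le> n"
  shows "cyclic_mor (degen n j)"
proof -
  define D where "D = (\<lambda>k. if k \<le> j then [(k, False)] else if k = j + 1 then [] else [(k - 1, False)])"
  have "[0..<n+2] = [0..<j+1] @ (j+1) # [j+2..<n+2]"
    using assms by (subst upt_split[of 0 "j+1" "n+2"]) (simp_all add: upt_conv_Cons)
  then have fd: "fib (degen n j) = map D ([0..<j+1] @ (j+1) # [j+2..<n+2])"
    by (simp add: degen_def D_def)
  have m1: "map D [0..<j+1] = map (\<lambda>k. [(k, False)]) [0..<j+1]"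
    by (rule map_cong) (auto simp: D_def)
  have m2: "map D [j+2..<n+2] = map (\<lambda>k. [(k, False)]) [j+1..<n+1]"
    by (rule nth_equalityI) (auto simp: D_def)
  have "D (j + 1) = []" by (simp add: D_def)
  then have "concat (fib (degen n j)) = concat (map D [0..<j+1]) @ concat (map D [j+2..<n+2])"
    by (simp add: fd)
  also have "\<dots> = map (\<lambda>x. (x, False)) ([0..<j+1] @ [j+1..<n+1])"
    by (simp only: m1 m2 concat_map_singleton map_append)
  also have "[0..<j+1] @ [j+1..<n+1] = [0..<n+1]"
    using assms upt_split[of 0 "j+1" "n+1"] by simp
  finally have concat_fib: "concat (fib (degen n j))
      = map (\<lambda>x. (x, False)) (rotate 0 (std_order False (src (degen n j))))"
    by (simp add: std_order_def degen_def)
  show ?thesis by (rule cyclic_morI[OF concat_fib]) (simp_all add: degen_def)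
qed

lemma cyclic_mor_refl: "cyclic_mor (refl_mor n)"
proof -
  have f: "fib (refl_mor n) = [(0, True)] # map (\<lambda>k. [(n + 1 - k, True)]) [1..<n+1]"
  proof -
    have "map (\<lambda>k. if k = 0 then [(0, True)] else [(n + 1 - k, True)]) [1..<n+1]
        = map (\<lambda>k. [(n + 1 - k, True)]) [1..<n+1]" by (rule map_cong) auto
    then show ?thesis by (simp add: refl_mor_def upt_conv_Cons)
  qed
  have m: "map (\<lambda>k. (n + 1 - k, True)) [1..<n+1] = map (\<lambda>x. (x, True)) (rev [1..<n+1])"
    by (rule nth_equalityI) (auto simp: rev_nth)
  have "concat (fib (refl_mor n)) = map (\<lambda>x. (x, True)) (0 # rev [1..<n+1])"
    unfolding f by (simp only: concat_map_singleton m concat.simps append.simps list.map)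
  also have "0 # rev [1..<n+1] = rotate (length (rev [1..<n+1])) (rev [1..<n+1] @ [0])"
    by (simp only: rotate_append) simp
  also have "rev [1..<n+1] @ [0] = rev [0..<n+1]" by (simp add: upt_conv_Cons)
  finally have concat_fib: "concat (fib (refl_mor n))
      = map (\<lambda>x. (x, True)) (rotate n (std_order True (src (refl_mor n))))"
    by (simp add: std_order_def refl_mor_def)
  show ?thesis
    by (rule cyclic_morI[OF concat_fib]) (use f in \<open>simp_all add: refl_mor_def\<close>)
qed

lemma Rcat_cyclic_mor: "g \<in> Rcat \<Longrightarrow> cyclic_mor g"
  by (induction rule: Rcat.induct)
    (auto intro: cyclic_mor_idm cyclic_mor_face cyclic_mor_degen cyclic_mor_refl cyclic_mor_comp)

section \<open>Precomposition with $H^{+}_{n+1}$\<close>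

definition relabel :: "mor \<Rightarrow> nat \<times> bool \<Rightarrow> nat \<times> bool" where
  "relabel h x = (fst (hd (fib h ! fst x)), snd x \<noteq> snd (hd (fib h ! fst x)))"

lemma comp_relabel:
  assumes "\<forall>x\<in>set (concat (fib a)). length (fib h ! fst x) = 1"
  shows "comp a h = Mor (src h) (tgt a) (map (map (relabel h)) (fib a))"
proof -
  have "concat (map (\<lambda>(j, \<alpha>). act \<alpha> (fib h ! j)) S) = map (relabel h) S"
    if S: "S \<in> set (fib a)" for S
  proof -
    have "map (\<lambda>(j, \<alpha>). act \<alpha> (fib h ! j)) S = map (\<lambda>x. [relabel h x]) S"
    proof (rule map_cong)
      fix x assume "x \<in> set S"
      then have "length (fib h ! fst x) = 1" using assms S by auto
      then obtain y where "fib h ! fst x = [y]" by (cases "fib h ! fst x") auto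
      then show "(\<lambda>(j, \<alpha>). act \<alpha> (fib h ! j)) x = [relabel h x]"
        by (cases x; cases y) (auto simp: act_def relabel_def)
    qed simp
    then show ?thesis by (metis concat_map_singleton)
  qed
  then show ?thesis unfolding comp_def by simp
qed

lemma HplusD:
  assumes "h \<in> Hplus n"
  shows "length (fib h) = n + 1" "src h = n" "tgt h = n"
    "\<And>k. k \<le> n \<Longrightarrow> length (fib h ! k) = 1" "fib h ! 0 = [(0, False)]"
  using assms by (auto simp: Hplus_def valid_def)

lemma relabel_Hplus_zero: "h \<in> Hplus n \<Longrightarrow> relabel h (0, \<beta>) = (0, \<beta>)"
  by (simp add: HplusD(5) relabel_def)

lemma comp_Hplus:
  assumes a: "cyclic_mor a" and h: "h \<in> Hplus n" and "src a = n"
  shows "comp a h = Mor n (tgt a) (map (map (relabel h)) (fib a))"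
proof -
  obtain \<alpha> r where "concat (fib a) = map (\<lambda>x. (x, \<alpha>)) (rotate r (std_order \<alpha> n))"
    using a \<open>src a = n\<close> unfolding cyclic_mor_def by blast
  then have "\<forall>x\<in>set (concat (fib a)). length (fib h ! fst x) = 1"
    using HplusD(4)[OF h] by auto
  then show ?thesis using comp_relabel HplusD(2)[OF h] by simp
qed

lemma Hplus_eqI:
  assumes h: "h \<in> Hplus n" and h': "h' \<in> Hplus n"
    and eq: "\<And>j. j \<le> n \<Longrightarrow> relabel h (j, \<alpha>) = relabel h' (j, \<alpha>)"
  shows "h = h'"
proof -
  have "fib h = fib h'"
  proof (rule nth_equalityI)
    show "length (fib h) = length (fib h')" using HplusD(1)[OF h] HplusD(1)[OF h'] by simp
    fix j assume "j < length (fib h)"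
    then have j: "j \<le> n" using HplusD(1)[OF h] by simp
    then have "hd (fib h ! j) = hd (fib h' ! j)"
      using eq[OF j] by (auto simp: relabel_def prod_eq_iff)
    moreover have "length (fib h ! j) = 1" "length (fib h' ! j) = 1"
      using HplusD(4)[OF h j] HplusD(4)[OF h' j] .
    ultimately show "fib h ! j = fib h' ! j"
      by (cases "fib h ! j"; cases "fib h' ! j") auto
  qed
  then show ?thesis using HplusD(2,3)[OF h] HplusD(2,3)[OF h'] by (cases h; cases h') auto
qed

lemma Hplus_relabel_onto:
  assumes "p \<le> n" and s: "distinct s" "set s = {0..n}" "s ! p = 0"
    and cf: "distinct (map fst cf)" "set (map fst cf) = {0..n}" "cf ! p = (0, \<alpha>)"
  shows "\<exists>h \<in> Hplus n. map (relabel h) (map (\<lambda>x. (x, \<alpha>)) s) = cf"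
proof -
  have len: "length s = n + 1" "length cf = n + 1"
    using s(1,2) cf(1,2) distinct_card[OF s(1)] distinct_card[OF cf(1)] by fastforce+
  have bij_s: "bij_betw ((!) s) {..<n+1} {0..n}"
    using bij_betw_nth[OF s(1)] s(2) len by simp
  have bij_cf: "bij_betw ((!) (map fst cf)) {..<n+1} {0..n}"
    using bij_betw_nth[OF cf(1)] cf(2) len by simp
  define pos where "pos = the_inv_into {..<n+1} ((!) s)"
  define \<sigma> where "\<sigma> j = fst (cf ! pos j)" for j
  have pos: "bij_betw pos {0..n} {..<n+1}"
    unfolding pos_def by (rule bij_betw_the_inv_into[OF bij_s])
  have pos_nth: "pos (s ! q) = q" if "q < n + 1" for q
    unfolding pos_def using bij_s that by (simp add: bij_betw_def the_inv_into_f_f)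
  have "bij_betw (((!) (map fst cf)) \<circ> pos) {0..n} {0..n}"
    by (rule bij_betw_trans[OF pos bij_cf])
  moreover have "(((!) (map fst cf)) \<circ> pos) j = \<sigma> j" if "j \<in> {0..n}" for j
    using bij_betw_apply[OF pos that] len by (simp add: \<sigma>_def)
  ultimately have \<sigma>: "bij_betw \<sigma> {0..n} {0..n}" using bij_betw_cong by blast
  txt \<open>$h$ sends $j$ to the entry of $cf$ at the position of $j$ in $s$, relabelled by $\alpha$.\<close>
  define h where "h = Mor n n (map (\<lambda>j. [(\<sigma> j, \<alpha> \<noteq> snd (cf ! pos j))]) [0..<n+1])"
  have fib_h: "fib h ! j = [(\<sigma> j, \<alpha> \<noteq> snd (cf ! pos j))]" if "j \<le> n" for j
    using that by (simp add: h_def nth_append)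
  have "valid h"
    using \<sigma> by (simp add: valid_def h_def o_def distinct_map bij_betw_def atLeastLessThanSuc_atLeastAtMost
        flip: Suc_eq_plus1)
  moreover have "pos 0 = p"
    using pos_nth[of p] s(3) \<open>p \<le> n\<close> by simp
  ultimately have "h \<in> Hplus n"
    using fib_h cf(3) by (simp add: Hplus_def h_def \<sigma>_def)
  moreover have "map (relabel h) (map (\<lambda>x. (x, \<alpha>)) s) = cf"
  proof (rule nth_equalityI)
    fix q assume "q < length (map (relabel h) (map (\<lambda>x. (x, \<alpha>)) s))"
    then have q: "q < n + 1" using len by simp
    then have "s ! q \<le> n" using s(2) len by (metis nth_mem atLeastAtMost_iff)
    then show "map (relabel h) (map (\<lambda>x. (x, \<alpha>)) s) ! q = cf ! q"
      using q len fib_h pos_nth[OF q] by (cases \<alpha>) (simp_all add: relabel_def \<sigma>_def prod_eq_iff)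
  qed (simp add: len)
  ultimately show ?thesis by blast
qed

section \<open>Uniqueness\<close>

lemma concat_fib_eq_if_relabel_eq:
  assumes a: "cyclic_mor a" and a': "cyclic_mor a'" and "src a = n" "src a' = n"
    and h: "h \<in> Hplus n" and h': "h' \<in> Hplus n"
    and eq: "map (relabel h) (concat (fib a)) = map (relabel h') (concat (fib a'))"
    and dist: "distinct (map fst (map (relabel h) (concat (fib a))))"
  shows "concat (fib a) = concat (fib a')"
proof -
  obtain \<alpha> r where r: "concat (fib a) = map (\<lambda>x. (x, \<alpha>)) (rotate r (std_order \<alpha> n))"
    using a \<open>src a = n\<close> unfolding cyclic_mor_def by blast
  obtain \<alpha>' r' where r': "concat (fib a') = map (\<lambda>x. (x, \<alpha>')) (rotate r' (std_order \<alpha>' n))"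
    using a' \<open>src a' = n\<close> unfolding cyclic_mor_def by blast
  obtain q where q: "q < n + 1" "rotate r (std_order \<alpha> n) ! q = 0"
    by (metis in_set_conv_nth length_std_order length_rotate set_rotate set_std_order
        atLeastLessThan_iff zero_less_Suc Suc_eq_plus1 le0)
  obtain q' where q': "q' < n + 1" "rotate r' (std_order \<alpha>' n) ! q' = 0"
    by (metis in_set_conv_nth length_std_order length_rotate set_rotate set_std_order
        atLeastLessThan_iff zero_less_Suc Suc_eq_plus1 le0)
  txt \<open>Both $h$ and $h'$ fix $0$ with its label, so the position of $0$ in the image
    pins down the common label and the rotation.\<close>
  define cf where "cf = map (relabel h) (concat (fib a))"
  have "cf ! q = (0, \<alpha>)" "length cf = n + 1"
    using q r relabel_Hplus_zero[OF h] by (simp_all add: cf_def)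
  moreover have "cf ! q' = (0, \<alpha>')"
    unfolding cf_def eq using q' r' relabel_Hplus_zero[OF h'] by simp
  ultimately have "q = q'" "\<alpha> = \<alpha>'"
    using dist q q' nth_eq_iff_index_eq[of "map fst cf" q q'] by (auto simp: cf_def)
  then have "rotate r (std_order \<alpha> n) = rotate r' (std_order \<alpha>' n)"
    using rotate_eq_of_nth_eq[of "std_order \<alpha> n" q r r'] q q' by simp
  then show ?thesis using r r' \<open>\<alpha> = \<alpha>'\<close> by simp
qed

lemma factorisation_unique:
  assumes f: "valid (comp a h)" and a: "cyclic_mor a" and a': "cyclic_mor a'"
    and h: "h \<in> Hplus n" and h': "h' \<in> Hplus n"
    and src: "src a = n" "src a' = n" and tgt: "tgt a = tgt a'"
    and eq: "comp a h = comp a' h'"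
  shows "a = a' \<and> h = h'"
proof -
  have fibs: "map (map (relabel h)) (fib a) = map (map (relabel h')) (fib a')"
    using eq comp_Hplus[OF a h src(1)] comp_Hplus[OF a' h' src(2)] by simp
  then have concat_eq: "map (relabel h) (concat (fib a)) = map (relabel h') (concat (fib a'))"
    by (metis map_concat)
  have "distinct (map fst (map (relabel h) (concat (fib a))))"
    using f comp_Hplus[OF a h src(1)] by (simp add: valid_def map_concat)
  then have concat: "concat (fib a) = concat (fib a')"
    using concat_fib_eq_if_relabel_eq[OF a a' src h h' concat_eq] by simp
  moreover have "map length (fib a) = map length (fib a')"
    using arg_cong[OF fibs, of "map length"] by (simp add: o_def)
  ultimately have "fib a = fib a'" by (rule concat_eq_concat_if_lengths_eq)
  then have "a = a'" using src tgt by (cases a; cases a') auto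
  obtain \<alpha> r where "concat (fib a) = map (\<lambda>x. (x, \<alpha>)) (rotate r (std_order \<alpha> n))"
    using a src unfolding cyclic_mor_def by blast
  then have "relabel h (j, \<alpha>) = relabel h' (j, \<alpha>)" if "j \<le> n" for j
    using that concat_eq concat unfolding map_eq_conv by force
  then have "h = h'" using Hplus_eqI[OF h h'] by blast
  with \<open>a = a'\<close> show ?thesis ..
qed

section \<open>The fibre shapes of $\mathcal{R}$\<close>

abbreviation mor_of_fibres :: "nat \<Rightarrow> (nat \<times> bool) list list \<Rightarrow> mor" where
  "mor_of_fibres n G \<equiv> Mor n (length G - 1) G"

lemma comp_face_left:
  assumes "length H = M + 1" "k < M"
  shows "comp (face M k) (Mor n M H) = Mor n (M - 1) (take k H @ [H!k @ H!(k+1)] @ drop (k+2) H)"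
proof -
  have "map (\<lambda>S. concat (map (\<lambda>(j, \<alpha>). act \<alpha> (H ! j)) S)) (fib (face M k))
      = take k H @ [H!k @ H!(k+1)] @ drop (k+2) H"
    using assms by (intro nth_equalityI) (auto simp: face_def nth_append min_def)
  then show ?thesis using assms by (simp add: comp_def face_def)
qed

lemma comp_degen_left:
  assumes "length H = m + 1" "j \<le> m"
  shows "comp (degen m j) (Mor n m H) = Mor n (m + 1) (take (j+1) H @ [[]] @ drop (j+1) H)"
proof -
  have "map (\<lambda>S. concat (map (\<lambda>(j, \<alpha>). act \<alpha> (H ! j)) S)) (fib (degen m j))
      = take (j+1) H @ [[]] @ drop (j+1) H"
  proof (rule nth_equalityI)
    fix i assume "i < length (map (\<lambda>S. concat (map (\<lambda>(j, \<alpha>). act \<alpha> (H ! j)) S)) (fib (degen m j)))"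
    then have "i < m + 2" by (simp add: degen_def)
    moreover have "j + 1 < i \<Longrightarrow> i - Suc 0 = Suc (i - 2)" by arith
    ultimately show "map (\<lambda>S. concat (map (\<lambda>(j, \<alpha>). act \<alpha> (H ! j)) S)) (fib (degen m j)) ! i =
        (take (j+1) H @ [[]] @ drop (j+1) H) ! i"
      using assms by (auto simp: degen_def nth_append min_def)
  qed (use assms in \<open>simp add: degen_def\<close>)
  then show ?thesis using assms by (simp add: comp_def degen_def)
qed

lemma Rcat_merge_fibres:
  assumes "mor_of_fibres n (xs @ S # T # ys) \<in> Rcat"
  shows "mor_of_fibres n (xs @ (S @ T) # ys) \<in> Rcat"
proof -
  define M where "M = length (xs @ S # T # ys) - 1"
  have M: "length (xs @ S # T # ys) = M + 1" "length xs < M" by (simp_all add: M_def)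
  have "face M (length xs) \<in> Rcat" using M by (intro R_face) simp_all
  from R_comp[OF assms[folded M_def] this]
  have "comp (face M (length xs)) (Mor n M (xs @ S # T # ys)) \<in> Rcat" by simp
  moreover have "comp (face M (length xs)) (Mor n M (xs @ S # T # ys))
      = mor_of_fibres n (xs @ (S @ T) # ys)"
    using comp_face_left[OF M] M by (simp add: nth_append)
  ultimately show ?thesis by simp
qed

lemma Rcat_insert_empty_fibre:
  assumes "xs \<noteq> []" and "mor_of_fibres n (xs @ ys) \<in> Rcat"
  shows "mor_of_fibres n (xs @ [] # ys) \<in> Rcat"
proof -
  define M where "M = length (xs @ ys) - 1"
  have M: "length (xs @ ys) = M + 1" "length xs - 1 \<le> M" using assms(1) by (auto simp: M_def)
  have "degen M (length xs - 1) \<in> Rcat" using M by (intro R_degen)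
  from R_comp[OF assms(2)[folded M_def] this]
  have "comp (degen M (length xs - 1)) (Mor n M (xs @ ys)) \<in> Rcat" by simp
  moreover have "comp (degen M (length xs - 1)) (Mor n M (xs @ ys)) = mor_of_fibres n (xs @ [] # ys)"
    using comp_degen_left[OF M] M assms(1) by simp
  ultimately show ?thesis by simp
qed

lemma Rcat_absorb_singletons:
  "mor_of_fibres n (xs @ T # map (\<lambda>x. [x]) S @ ys) \<in> Rcat
    \<Longrightarrow> mor_of_fibres n (xs @ (T @ S) # ys) \<in> Rcat"
proof (induction S arbitrary: T)
  case (Cons s S)
  then have "mor_of_fibres n (xs @ (T @ [s]) # map (\<lambda>x. [x]) S @ ys) \<in> Rcat"
    using Rcat_merge_fibres[of n xs T "[s]" "map (\<lambda>x. [x]) S @ ys"] by simp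
  then show ?case using Cons.IH[of "T @ [s]"] by simp
qed simp

lemma Rcat_split_singletons:
  "xs \<noteq> [] \<Longrightarrow> mor_of_fibres n (xs @ map (\<lambda>x. [x]) (concat Gs)) \<in> Rcat
    \<Longrightarrow> mor_of_fibres n (xs @ Gs) \<in> Rcat"
proof (induction Gs arbitrary: xs)
  case (Cons S Gs)
  show ?case
  proof (cases S)
    case Nil
    then show ?thesis using Cons Rcat_insert_empty_fibre by simp
  next
    case (Cons s S')
    with Cons.prems have "mor_of_fibres n (xs @ [s] # map (\<lambda>x. [x]) S' @ map (\<lambda>x. [x]) (concat Gs)) \<in> Rcat"
      by simp
    then have "mor_of_fibres n ((xs @ [S]) @ map (\<lambda>x. [x]) (concat Gs)) \<in> Rcat"
      using Rcat_absorb_singletons[of n xs "[s]" S' "map (\<lambda>x. [x]) (concat Gs)"] Cons by simp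
    then show ?thesis using Cons.IH[of "xs @ [S]"] by simp
  qed
qed simp

lemma Rcat_coarsen:
  assumes "mor_of_fibres n (A # map (\<lambda>x. [x]) (E @ concat Gs)) \<in> Rcat"
  shows "mor_of_fibres n ((A @ E) # Gs) \<in> Rcat"
proof -
  have "mor_of_fibres n ([A @ E] @ map (\<lambda>x. [x]) (concat Gs)) \<in> Rcat"
    using assms Rcat_absorb_singletons[of n "[]" A E "map (\<lambda>x. [x]) (concat Gs)"] by simp
  then show ?thesis using Rcat_split_singletons[of "[A @ E]"] by simp
qed

definition reflect :: "nat \<Rightarrow> nat \<Rightarrow> nat" where
  "reflect n k = (if k = 0 then 0 else n + 1 - k)"

text \<open>$[n]$ in cyclic order with $0$ at position $p$: increasing, or, for $\alpha = t$, its
  image under $\rho_n$, decreasing.\<close>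
definition cyclic_seq :: "bool \<Rightarrow> nat \<Rightarrow> nat \<Rightarrow> nat list" where
  "cyclic_seq \<alpha> n p = map (if \<alpha> then reflect n else id) ([n+1-p..<n+1] @ [0..<n+1-p])"

lemma cyclic_seq_facts:
  assumes "p \<le> n"
  shows "length (cyclic_seq \<alpha> n p) = n + 1" "distinct (cyclic_seq \<alpha> n p)"
    "set (cyclic_seq \<alpha> n p) = {0..n}" "cyclic_seq \<alpha> n p ! p = 0"
proof -
  define s0 where "s0 = [n+1-p..<n+1] @ [0..<n+1-p]"
  have s0: "length s0 = n + 1" "distinct s0" "set s0 = {0..n}" "s0 ! p = 0"
    using assms by (auto simp: s0_def nth_append)
  have "inj_on (reflect n) {0..n}"
    by (auto simp: inj_on_def reflect_def split: if_splits)
  moreover have "reflect n ` {0..n} = {0..n}"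
  proof (intro equalityI subsetI)
    fix x assume "x \<in> {0..n}"
    then have "reflect n (reflect n x) = x" "reflect n x \<in> {0..n}" by (auto simp: reflect_def)
    then show "x \<in> reflect n ` {0..n}" by (metis imageI)
  qed (auto simp: reflect_def)
  moreover have "cyclic_seq \<alpha> n p = map (if \<alpha> then reflect n else id) s0"
    by (simp add: cyclic_seq_def s0_def)
  ultimately show "length (cyclic_seq \<alpha> n p) = n + 1" "distinct (cyclic_seq \<alpha> n p)"
    "set (cyclic_seq \<alpha> n p) = {0..n}" "cyclic_seq \<alpha> n p ! p = 0"
    using s0 assms by (auto simp: distinct_map reflect_def)
qed

definition basic_fibres :: "bool \<Rightarrow> nat \<Rightarrow> nat \<Rightarrow> (nat \<times> bool) list list" where
  "basic_fibres \<alpha> n p = (let c = map (\<lambda>x. (x, \<alpha>)) (cyclic_seq \<alpha> n p)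
     in take (p+1) c # map (\<lambda>x. [x]) (drop (p+1) c))"

lemma basic_fibres_eq:
  assumes "p \<le> n"
  shows "basic_fibres \<alpha> n p = map (\<lambda>x. ((if \<alpha> then reflect n x else x), \<alpha>)) ([n+1-p..<n+1] @ [0])
     # map (\<lambda>x. [((if \<alpha> then reflect n x else x), \<alpha>)]) [1..<n+1-p]"
proof -
  have "take (Suc p) ([n+1-p..<n+1] @ [0..<n+1-p]) = [n+1-p..<n+1] @ [0]"
    "drop (Suc p) ([n+1-p..<n+1] @ [0..<n+1-p]) = [1..<n+1-p]"
    using assms by (simp_all add: upt_conv_Cons)
  then show ?thesis
    by (cases \<alpha>) (simp_all add: basic_fibres_def cyclic_seq_def take_map drop_map o_def)
qed

lemma face_last_nth:
  "j < Suc k \<Longrightarrow> fib (face (Suc k) (Suc k)) ! j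
     = (if j = 0 then [(Suc k, False), (0, False)] else [(j, False)])"
  by (simp add: face_def)

lemma Rcat_basic_fibres_False: "p \<le> n \<Longrightarrow> Mor n (n - p) (basic_fibres False n p) \<in> Rcat"
proof (induction p arbitrary: n)
  case 0
  have "Mor n (n - 0) (basic_fibres False n 0) = idm n"
    by (simp add: basic_fibres_eq idm_def upt_conv_Cons)
  then show ?case using R_id by simp
next
  case (Suc p)
  then obtain k where k: "n = Suc k" "p \<le> k" by (cases n) auto
  have "face (Suc k) (Suc k) \<in> Rcat" by (rule R_face) simp_all
  from R_comp[OF this Suc.IH[OF k(2)]]
  have "comp (Mor k (k - p) (basic_fibres False k p)) (face (Suc k) (Suc k)) \<in> Rcat"
    by (simp add: face_def)
  moreover have "comp (Mor k (k - p) (basic_fibres False k p)) (face (Suc k) (Suc k))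
      = Mor n (n - Suc p) (basic_fibres False n (Suc p))"
  proof -
    define fd where "fd = fib (face (Suc k) (Suc k))"
    have m1: "map (\<lambda>j. fd ! j) [k+1-p..<k+1] = map (\<lambda>j. [(j, False)]) [k+1-p..<k+1]"
      using k by (intro map_cong) (auto simp: fd_def face_last_nth)
    have m2: "map (\<lambda>j. fd ! j) [1..<k+1-p] = map (\<lambda>j. [(j, False)]) [1..<k+1-p]"
      by (rule map_cong) (auto simp: fd_def face_last_nth)
    have f0: "fd ! 0 = [(Suc k, False), (0, False)]" by (simp add: fd_def face_last_nth)
    have "comp (Mor k (k - p) (basic_fibres False k p)) (face (Suc k) (Suc k)) = Mor (Suc k) (k - p)
       (concat (map (\<lambda>j. fd ! j) ([k+1-p..<k+1] @ [0])) # map (\<lambda>x. fd ! x) [1..<k+1-p])"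
      using k by (simp add: basic_fibres_eq comp_def fd_def[symmetric] o_def)
    also have "\<dots> = Mor (Suc k) (k - p) (map (\<lambda>x. (x, False)) (([k+1-p..<k+1] @ [Suc k]) @ [0])
        # map (\<lambda>x. [(x, False)]) [1..<k+1-p])"
      by (simp only: map_append concat_append m1 m2 concat_map_singleton) (simp add: f0)
    also have "[k+1-p..<k+1] @ [Suc k] = [Suc k + 1 - Suc p..<Suc k + 1]"
      using k by (simp add: upt_Suc)
    finally show ?thesis using k by (simp add: basic_fibres_eq)
  qed
  ultimately show ?case by simp
qed

lemma fib_refl_mor_nth: "j \<le> n \<Longrightarrow> fib (refl_mor n) ! j = [(reflect n j, True)]"
  by (simp add: refl_mor_def reflect_def nth_append)

text \<open>The case $\alpha = t$ is obtained from $\alpha = 1$ by precomposing with $\rho_n$.\<close>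
lemma Rcat_basic_fibres: "p \<le> n \<Longrightarrow> mor_of_fibres n (basic_fibres \<alpha> n p) \<in> Rcat"
proof -
  assume p: "p \<le> n"
  have len: "length (basic_fibres \<alpha> n p) - 1 = n - p"
    using p by (simp add: basic_fibres_eq)
  define fr where "fr = fib (refl_mor n)"
  have m1: "map (\<lambda>j. fr ! j) [n+1-p..<n+1] = map (\<lambda>j. [(reflect n j, True)]) [n+1-p..<n+1]"
    by (rule map_cong) (auto simp: fr_def fib_refl_mor_nth)
  have m2: "map (\<lambda>j. fr ! j) [1..<n+1-p] = map (\<lambda>j. [(reflect n j, True)]) [1..<n+1-p]"
    by (rule map_cong) (auto simp: fr_def fib_refl_mor_nth)
  have f0: "fr ! 0 = [(reflect n 0, True)]" unfolding fr_def by (rule fib_refl_mor_nth) simp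
  have "comp (Mor n (n - p) (basic_fibres False n p)) (refl_mor n) = Mor n (n - p)
       (concat (map (\<lambda>j. fr ! j) ([n+1-p..<n+1] @ [0])) # map (\<lambda>x. fr ! x) [1..<n+1-p])"
    using p by (simp add: basic_fibres_eq comp_def fr_def[symmetric] o_def)
  also have "\<dots> = Mor n (n - p) (basic_fibres True n p)"
    using p by (simp only: map_append concat_append m1 m2 concat_map_singleton basic_fibres_eq)
      (simp add: f0)
  finally have "comp (Mor n (n - p) (basic_fibres False n p)) (refl_mor n)
      = Mor n (n - p) (basic_fibres True n p)" .
  moreover have "comp (Mor n (n - p) (basic_fibres False n p)) (refl_mor n) \<in> Rcat"
    using R_comp[OF R_refl Rcat_basic_fibres_False[OF p]] by simp
  ultimately show ?thesis using Rcat_basic_fibres_False[OF p] len by (cases \<alpha>) simp_all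
qed

lemma Rcat_coarsening:
  assumes "p \<le> n" and c: "concat G = map (\<lambda>x. (x, \<alpha>)) (cyclic_seq \<alpha> n p)"
    and "p < length (hd G)"
  shows "mor_of_fibres n G \<in> Rcat"
proof -
  define c where "c = map (\<lambda>x. (x, \<alpha>)) (cyclic_seq \<alpha> n p)"
  have G: "G = hd G # tl G" using c cyclic_seq_facts(1)[OF assms(1), of \<alpha>] by (cases G) auto
  then have "c = hd G @ concat (tl G)" using c c_def by (metis concat.simps(2))
  then have "take (p+1) c = take (p+1) (hd G)" "drop (p+1) c = drop (p+1) (hd G) @ concat (tl G)"
    using assms(3) by simp_all
  moreover have "mor_of_fibres n (take (p+1) c # map (\<lambda>x. [x]) (drop (p+1) c)) \<in> Rcat"
    using Rcat_basic_fibres[OF assms(1)] by (simp add: basic_fibres_def c_def Let_def)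
  ultimately have "mor_of_fibres n ((take (p+1) (hd G) @ drop (p+1) (hd G)) # tl G) \<in> Rcat"
    by (intro Rcat_coarsen) simp
  then show ?thesis using G by simp
qed

section \<open>Existence\<close>

lemma factorisation_exists:
  assumes f: "IGamma f"
  shows "\<exists>a h. a \<in> Rcat \<and> h \<in> Hplus (src f) \<and> src a = src f \<and> tgt a = tgt f \<and> f = comp a h"
proof -
  define n where "n = src f"
  define F where "F = fib f"
  define cf where "cf = concat F"
  have valid: "length F = tgt f + 1" "distinct (map fst cf)" "set (map fst cf) = {0..n}"
    using f by (simp_all add: IGamma_def valid_def F_def cf_def n_def)
  obtain F0 Fs where F: "F = F0 # Fs" using valid(1) by (cases F) auto
  have "0 \<in> fst ` set F0" using f F by (simp add: IGamma_def F_def)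
  then obtain p where p: "p < length F0" "fst (F0 ! p) = 0"
    by (metis imageE in_set_conv_nth)
  have cf_p: "cf ! p = F0 ! p" using p by (simp add: cf_def F nth_append)
  have "length cf = n + 1"
    using distinct_card[OF valid(2)] valid(3) by simp
  then have "p \<le> n" using p by (simp add: cf_def F)
  define \<alpha> where "\<alpha> = snd (cf ! p)"
  define c where "c = map (\<lambda>x. (x, \<alpha>)) (cyclic_seq \<alpha> n p)"
  note seq = cyclic_seq_facts[OF \<open>p \<le> n\<close>, of \<alpha>]
  define G where "G = chunks (map length F) c"
  have "concat G = c"
    using seq(1) \<open>length cf = n + 1\<close> by (simp add: G_def c_def concat_chunks cf_def length_concat)
  moreover have "hd G = take (length F0) c" by (simp add: G_def F)
  ultimately have "mor_of_fibres n G \<in> Rcat"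
    using Rcat_coarsening[OF \<open>p \<le> n\<close>] p seq(1) c_def \<open>p \<le> n\<close> by simp
  moreover have "length G - 1 = tgt f" using valid(1) by (simp add: G_def)
  ultimately have a: "Mor n (tgt f) G \<in> Rcat" by simp
  obtain h where h: "h \<in> Hplus n" "map (relabel h) c = cf"
    using Hplus_relabel_onto[OF \<open>p \<le> n\<close> seq(2-4) valid(2,3)] cf_p p(2)
    by (auto simp: c_def \<alpha>_def prod_eq_iff)
  have "comp (Mor n (tgt f) G) h = Mor n (tgt f) (chunks (map length F) cf)"
    using comp_Hplus[OF Rcat_cyclic_mor[OF a] h(1)] h(2) by (simp add: G_def map_chunks)
  also have "\<dots> = f" by (simp add: cf_def chunks_concat F_def n_def)
  finally have "comp (Mor n (tgt f) G) h = f" .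
  moreover have "h \<in> Hplus (src f)" "src (Mor n (tgt f) G) = src f" "tgt (Mor n (tgt f) G) = tgt f"
    using h(1) by (simp_all add: n_def)
  ultimately show ?thesis using a by metis
qed

theorem mainTheorem5:
  assumes "IGamma f"
  shows "\<exists>!(a, h). a \<in> Rcat \<and> h \<in> Hplus (src f)
            \<and> src a = src f \<and> tgt a = tgt f \<and> f = comp a h"
proof -
  obtain a h where ah: "a \<in> Rcat" "h \<in> Hplus (src f)" "src a = src f" "tgt a = tgt f" "f = comp a h"
    using factorisation_exists[OF assms] by blast
  have unique: "a' = a \<and> h' = h" if a': "a' \<in> Rcat" "h' \<in> Hplus (src f)" "src a' = src f"
    "tgt a' = tgt f" "f = comp a' h'" for a' h'
  proof (rule factorisation_unique[where n = "src f"])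
    show "valid (comp a' h')" using assms a'(5) by (simp add: IGamma_def)
    show "cyclic_mor a'" "cyclic_mor a" using a'(1) ah(1) by (simp_all add: Rcat_cyclic_mor)
    show "comp a' h' = comp a h" using a'(5) ah(5) by simp
  qed (simp_all only: a'(2-4) ah(2-4))
  show ?thesis
    by (rule ex1I[of _ "(a, h)"]) (unfold split_paired_all prod.case prod.inject; use ah unique in blast)+
qed

end
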